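(* Consider a Fisher market with $n$ buyers and $m$ items, each item having supply $1$. Buyer $i$ has budget $B_i \ge 0$, valuations $v_{ij} \ge 0$ for items $j=1,\dots,m$, and a hard demand $d_i \ge 0$. For an allocation $x=(x_{ij}) \in \mathbb{R}^{n\times m}_{\ge 0}$ write $u_i = \sum_j v_{ij}x_{ij} - d_i$. Assume there exists an allocation $x \ge 0$ with $\sum_i x_{ij}\le 1$ for all $j$ and $u_i>0$ for all $i$. Consider the convex program $$\max_{x\ge 0} \sum_i B_i \log\Big(\sum_j v_{ij}x_{ij} - d_i\Big) \quad \text{s.t.}\quad \sum_i x_{ij}\le 1 \ \ \forall j=1,\dots,m.$$ Let $x$ be an optimal solution and let $p=(p_j)_j \ge 0$ be the optimal dual variables (prices) associated with the supply constraints $\sum_i x_{ij}\le 1$, so that $x$, $p$ and multipliers for the constraints $x\ge 0$ satisfy the KKT conditions. Then for every buyer $i$, $$B_i\Big(1+\frac{d_i}{u_i}\Big) = \sum_j p_j x_{ij}.$$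
   Context: This is the "Fisher market with hard demands" setting: buyer $i$'s utility from bundle $x_i$ is $u_i(x_i)=\sum_j v_{ij}x_{ij}-d_i$, and the program maximizes the budget-weighted sum of logarithms of these utilities subject to unit supplies. *)

theory Defs
  imports Complex_Main
begin

text \<open>Buyers are indexed by i < n, items by j < m. Allocations are x :: nat => nat => real.\<close>

definition util :: "nat \<Rightarrow> (nat \<Rightarrow> nat \<Rightarrow> real) \<Rightarrow> (nat \<Rightarrow> real) \<Rightarrow> (nat \<Rightarrow> nat \<Rightarrow> real) \<Rightarrow> nat \<Rightarrow> real" where
  "util m v d x i = (\<Sum>j<m. v i j * x i j) - d i"

definition objective :: "nat \<Rightarrow> nat \<Rightarrow> (nat \<Rightarrow> real) \<Rightarrow> (nat \<Rightarrow> nat \<Rightarrow> real) \<Rightarrow> (nat \<Rightarrow> real) \<Rightarrow> (nat \<Rightarrow> nat \<Rightarrow> real) \<Rightarrow> real" where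
  "objective n m B v d x = (\<Sum>i<n. B i * ln (util m v d x i))"

definition feasible :: "nat \<Rightarrow> nat \<Rightarrow> (nat \<Rightarrow> nat \<Rightarrow> real) \<Rightarrow> bool" where
  "feasible n m x \<longleftrightarrow> (\<forall>i<n. \<forall>j<m. 0 \<le> x i j) \<and> (\<forall>j<m. (\<Sum>i<n. x i j) \<le> 1)"

text \<open>Feasible and in the domain of the objective (all utilities positive).\<close>
definition admissible :: "nat \<Rightarrow> nat \<Rightarrow> (nat \<Rightarrow> nat \<Rightarrow> real) \<Rightarrow> (nat \<Rightarrow> real) \<Rightarrow> (nat \<Rightarrow> nat \<Rightarrow> real) \<Rightarrow> bool" where
  "admissible n m v d x \<longleftrightarrow> feasible n m x \<and> (\<forall>i<n. util m v d x i > 0)"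

definition optimal :: "nat \<Rightarrow> nat \<Rightarrow> (nat \<Rightarrow> real) \<Rightarrow> (nat \<Rightarrow> nat \<Rightarrow> real) \<Rightarrow> (nat \<Rightarrow> real) \<Rightarrow> (nat \<Rightarrow> nat \<Rightarrow> real) \<Rightarrow> bool" where
  "optimal n m B v d x \<longleftrightarrow> admissible n m v d x \<and>
     (\<forall>y. admissible n m v d y \<longrightarrow> objective n m B v d y \<le> objective n m B v d x)"

text \<open>KKT conditions for  max objective  s.t.  sum_i x_ij <= 1 (multiplier p_j),  x_ij >= 0 (multiplier lam_ij):
  stationarity  d objective / d x_ij = p_j - lam_ij, primal and dual feasibility, complementary slackness.\<close>
definition KKT :: "nat \<Rightarrow> nat \<Rightarrow> (nat \<Rightarrow> real) \<Rightarrow> (nat \<Rightarrow> nat \<Rightarrow> real) \<Rightarrow> (nat \<Rightarrow> real) \<Rightarrow>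
    (nat \<Rightarrow> nat \<Rightarrow> real) \<Rightarrow> (nat \<Rightarrow> real) \<Rightarrow> (nat \<Rightarrow> nat \<Rightarrow> real) \<Rightarrow> bool" where
  "KKT n m B v d x p lam \<longleftrightarrow>
     feasible n m x \<and>
     (\<forall>j<m. 0 \<le> p j) \<and> (\<forall>i<n. \<forall>j<m. 0 \<le> lam i j) \<and>
     (\<forall>i<n. \<forall>j<m. ((\<lambda>t. objective n m B v d (x(i := (x i)(j := t)))) has_real_derivative (p j - lam i j)) (at (x i j))) \<and>
     (\<forall>j<m. p j * ((\<Sum>i<n. x i j) - 1) = 0) \<and>
     (\<forall>i<n. \<forall>j<m. lam i j * x i j = 0)"

end

theory Submission
  imports Defs
begin

text \<open>Changing the single entry x i j moves only buyer i's utility, and does so linearly with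
  slope v i j; hence the partial derivative of the objective in x i j is B i * v i j / u i.
  KKT stationarity identifies it with p j - lam i j; multiplying by x i j, using complementary
  slackness lam i j * x i j = 0 and summing over j gives
  sum_j p j * x i j = (B i / u i) * (u i + d i).\<close>

lemma util_fun_upd_same:
  assumes "j < m"
  shows "util m v d (x(i := (x i)(j := t))) i = util m v d x i + v i j * (t - x i j)"
proof -
  have "(\<Sum>l<m. v i l * (x(i := (x i)(j := t))) i l) - (\<Sum>l<m. v i l * x i l)
        = (\<Sum>l<m. if l = j then v i j * (t - x i j) else 0)"
    by (subst sum_subtractf[symmetric]) (rule sum.cong, auto simp: algebra_simps)
  also have "\<dots> = v i j * (t - x i j)"
    using assms by simp
  finally show ?thesis
    unfolding util_def by simp
qed

lemma util_fun_upd_other: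
  assumes "k \<noteq> i"
  shows "util m v d (x(i := (x i)(j := t))) k = util m v d x k"
  using assms unfolding util_def by simp

lemma objective_fun_upd:
  assumes "i < n" "j < m"
  shows "objective n m B v d (x(i := (x i)(j := t))) =
    (\<Sum>k\<in>{..<n} - {i}. B k * ln (util m v d x k)) + B i * ln (util m v d x i + v i j * (t - x i j))"
proof -
  let ?y = "x(i := (x i)(j := t))"
  have "objective n m B v d ?y =
      B i * ln (util m v d ?y i) + (\<Sum>k\<in>{..<n} - {i}. B k * ln (util m v d ?y k))"
    unfolding objective_def using assms by (subst sum.remove[of _ i]) auto
  also have "(\<Sum>k\<in>{..<n} - {i}. B k * ln (util m v d ?y k)) =
      (\<Sum>k\<in>{..<n} - {i}. B k * ln (util m v d x k))"
    by (rule sum.cong) (auto simp: util_fun_upd_other)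
  finally show ?thesis
    using util_fun_upd_same[OF assms(2)] by (simp only: add.commute)
qed

lemma objective_partial_derivative:
  assumes "i < n" "j < m" "util m v d x i > 0"
  shows "((\<lambda>t. objective n m B v d (x(i := (x i)(j := t))))
           has_real_derivative B i * v i j / util m v d x i) (at (x i j))"
proof -
  have "((\<lambda>t. (\<Sum>k\<in>{..<n} - {i}. B k * ln (util m v d x k))
               + B i * ln (util m v d x i + v i j * (t - x i j)))
         has_real_derivative B i * v i j / util m v d x i) (at (x i j))"
    using assms(3) by (auto intro!: derivative_eq_intros simp: field_simps)
  then show ?thesis
    by (simp add: objective_fun_upd[OF assms(1,2)])
qed

lemma KKT_stationarity:
  assumes "KKT n m B v d x p lam" "i < n" "j < m" "util m v d x i > 0"
  shows "p j - lam i j = B i * v i j / util m v d x i"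
proof -
  have "((\<lambda>t. objective n m B v d (x(i := (x i)(j := t)))) has_real_derivative p j - lam i j)
          (at (x i j))"
    using assms(1-3) unfolding KKT_def by blast
  then show ?thesis
    using DERIV_unique objective_partial_derivative[OF assms(2-4)] by blast
qed

lemma KKT_spending_eq:
  assumes kkt: "KKT n m B v d x p lam" and "i < n" and u_pos: "util m v d x i > 0"
  shows "B i * (1 + d i / util m v d x i) = (\<Sum>j<m. p j * x i j)"
proof -
  define u where "u = util m v d x i"
  have slack: "lam i j * x i j = 0" if "j < m" for j
    using kkt \<open>i < n\<close> that unfolding KKT_def by blast
  have "(\<Sum>j<m. p j * x i j) = (\<Sum>j<m. (p j - lam i j) * x i j)"
    by (rule sum.cong) (auto simp: slack algebra_simps)
  also have "\<dots> = (\<Sum>j<m. B i / u * (v i j * x i j))"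
    by (rule sum.cong) (auto simp: KKT_stationarity[OF kkt \<open>i < n\<close> _ u_pos] u_def)
  also have "\<dots> = B i / u * (\<Sum>j<m. v i j * x i j)"
    by (rule sum_distrib_left[symmetric])
  also have "\<dots> = B i / u * (u + d i)"
    by (simp add: u_def util_def)
  also have "\<dots> = B i * (1 + d i / u)"
    using u_pos by (simp add: u_def field_simps)
  finally show ?thesis
    by (simp add: u_def)
qed

text \<open>Only the positivity of the optimal utilities is taken from the hypotheses.\<close>

theorem lemma1:
  fixes n m :: nat
    and B :: "nat \<Rightarrow> real" and v :: "nat \<Rightarrow> nat \<Rightarrow> real" and d :: "nat \<Rightarrow> real"
    and x :: "nat \<Rightarrow> nat \<Rightarrow> real" and p :: "nat \<Rightarrow> real" and lam :: "nat \<Rightarrow> nat \<Rightarrow> real"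
  assumes B_nonneg: "\<forall>i<n. 0 \<le> B i"
    and v_nonneg: "\<forall>i<n. \<forall>j<m. 0 \<le> v i j"
    and d_nonneg: "\<forall>i<n. 0 \<le> d i"
    and slater: "\<exists>y. admissible n m v d y"
    and opt: "optimal n m B v d x"
    and kkt: "KKT n m B v d x p lam"
  shows "\<forall>i<n. B i * (1 + d i / util m v d x i) = (\<Sum>j<m. p j * x i j)"
proof (intro allI impI)
  fix i assume "i < n"
  moreover have "util m v d x i > 0"
    using opt \<open>i < n\<close> unfolding optimal_def admissible_def by blast
  ultimately show "B i * (1 + d i / util m v d x i) = (\<Sum>j<m. p j * x i j)"
    using KKT_spending_eq[OF kkt] by blast
qed

end
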